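(* Let $F\in\mathbb{Z}[x_0,\ldots,x_n]$ be a form. Then $\mathrm{o}(F)=n+1$ if and only if $\mathrm{o}(F_p)=n+1$ for all except finitely many primes $p$.
   Context: $F_p\in\mathbb{F}_p[x_0,\dots,x_n]$ denotes the reduction of $F$ modulo $p$. The order of a form over a field $K$ is the smallest integer $m$ such that the form is equivalent, via an invertible linear change of variables over $K$, to a form explicitly involving only $m$ variables; $\mathrm{o}(F)$ is the order over $\mathbb{Q}$ and $\mathrm{o}(F_p)$ the order over $\mathbb{F}_p$. *)

theory Defs
  imports Complex_Main "HOL-Library.Poly_Mapping" "HOL-Computational_Algebra.Primes"
begin

text \<open>Multivariate polynomials in the variables x_0, x_1, ... with coefficients in 'a,
  represented as finitely supported maps from monomials (exponent vectors) to coefficients.\<close>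
type_synonym 'a mpoly = "(nat \<Rightarrow>\<^sub>0 nat) \<Rightarrow>\<^sub>0 'a"

definition Var :: "nat \<Rightarrow> 'a::comm_semiring_1 mpoly" where
  "Var i = Poly_Mapping.single (Poly_Mapping.single i 1) 1"

definition Const :: "'a::comm_semiring_1 \<Rightarrow> 'a mpoly" where
  "Const c = Poly_Mapping.single 0 c"

definition vars :: "'a::zero mpoly \<Rightarrow> nat set" where
  "vars P = {i. \<exists>mo\<in>Poly_Mapping.keys P. i \<in> Poly_Mapping.keys mo}"

definition mdeg :: "(nat \<Rightarrow>\<^sub>0 nat) \<Rightarrow> nat" where
  "mdeg mo = (\<Sum>i\<in>Poly_Mapping.keys mo. Poly_Mapping.lookup mo i)"

definition is_form :: "'a::zero mpoly \<Rightarrow> bool" where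
  "is_form P \<longleftrightarrow> (\<exists>d. \<forall>mo\<in>Poly_Mapping.keys P. mdeg mo = d)"

definition subst :: "(nat \<Rightarrow> 'a::comm_semiring_1 mpoly) \<Rightarrow> 'a mpoly \<Rightarrow> 'a mpoly" where
  "subst \<sigma> P = (\<Sum>mo\<in>Poly_Mapping.keys P. Const (Poly_Mapping.lookup P mo) * (\<Prod>i\<in>Poly_Mapping.keys mo. \<sigma> i ^ Poly_Mapping.lookup mo i))"

definition lin_subst :: "nat \<Rightarrow> (nat \<Rightarrow> nat \<Rightarrow> 'a::comm_semiring_1) \<Rightarrow> 'a mpoly \<Rightarrow> 'a mpoly" where
  "lin_subst n A P = subst (\<lambda>i. if i \<le> n then (\<Sum>j\<le>n. Const (A i j) * Var j) else Var i) P"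

definition order_field :: "nat \<Rightarrow> 'a::field mpoly \<Rightarrow> nat" where
  "order_field n P = (LEAST m. \<exists>A B :: nat \<Rightarrow> nat \<Rightarrow> 'a.
      (\<forall>i\<le>n. \<forall>j\<le>n. (\<Sum>k\<le>n. A i k * B k j) = (if i = j then 1 else 0))
      \<and> card (vars (lin_subst n A P)) \<le> m)"

text \<open>Reduction modulo p (coefficients represented by their residues in {0..p-1}).\<close>
definition reduce :: "int \<Rightarrow> int mpoly \<Rightarrow> int mpoly" where
  "reduce p P = Poly_Mapping.map (\<lambda>c. c mod p) P"

text \<open>Order of the reduction F_p over F_p: F_p-arithmetic is modelled by integer arithmetic
  modulo p; a matrix over F_p is represented by an integer lift, invertible modulo p.\<close>
definition order_mod :: "int \<Rightarrow> nat \<Rightarrow> int mpoly \<Rightarrow> nat" where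
  "order_mod p n F = (LEAST m. \<exists>A B :: nat \<Rightarrow> nat \<Rightarrow> int.
      (\<forall>i\<le>n. \<forall>j\<le>n. (\<Sum>k\<le>n. A i k * B k j) mod p = (if i = j then 1 else 0) mod p)
      \<and> card (vars (reduce p (lin_subst n A F))) \<le> m)"

end

theory Submission
  imports Defs "HOL-Number_Theory.Cong" "Jordan_Normal_Form.Determinant"
begin

text \<open>
  Over a field of characteristic 0, a polynomial in x_0, ..., x_n has order at most n exactly when
  its partial derivatives are linearly dependent: a change of variables taking e_j to a kernel
  vector makes x_j disappear. Over the rationals this dependence is detected by the Gram matrix of
  the integer coefficient vectors of the partial derivatives of F, which is positive semidefinite;
  so o(F) = n + 1 iff its determinant D is nonzero.

  A variable missing from a polynomial has vanishing derivative in any characteristic. So if x_k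
  drops out of F(Ax) modulo p, the chain rule turns this into a combination of the partial
  derivatives of F vanishing modulo p whose coefficients are not all divisible by p, and the Gram
  matrix with its adjugate shows that p divides D. Hence o(F_p) = n + 1 whenever p does not
  divide D. Conversely, a rational change of variables witnessing o(F) <= n, once denominators
  are cleared, is invertible modulo all primes not dividing the denominator and witnesses
  o(F_p) <= n for them.
\<close>

abbreviation lookup :: "('a \<Rightarrow>\<^sub>0 'b::zero) \<Rightarrow> 'a \<Rightarrow> 'b" where
  "lookup \<equiv> Poly_Mapping.lookup"
abbreviation keys :: "('a \<Rightarrow>\<^sub>0 'b::zero) \<Rightarrow> 'a set" where
  "keys \<equiv> Poly_Mapping.keys"
abbreviation single :: "'a \<Rightarrow> 'b \<Rightarrow> ('a \<Rightarrow>\<^sub>0 'b::zero)" where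
  "single \<equiv> Poly_Mapping.single"

section \<open>Algebra of substitutions\<close>

lemma lookup_map: "f 0 = 0 \<Longrightarrow> lookup (Poly_Mapping.map f P) k = f (lookup P k)"
  by (simp add: Poly_Mapping.map.rep_eq when_def)

lemma lookup_Const_mult: "lookup (Const c * P) k = c * lookup P k"
proof -
  have "Const c * P = Poly_Mapping.map ((*) c) P"
    by (simp add: Const_def mult_map_scale_conv_mult)
  then show ?thesis by (simp add: lookup_map)
qed

lemma Const_0 [simp]: "Const 0 = 0"
  by (simp add: Const_def)

lemma Const_1 [simp]: "Const 1 = 1"
  by (simp add: Const_def)

lemma Const_add: "Const (a + b) = Const a + Const b"
  by (simp add: Const_def single_add)

lemma Const_mult: "Const (a * b) = Const a * Const b"
  by (simp add: Const_def mult_single)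

lemma Const_sum: "Const (sum f A) = (\<Sum>a\<in>A. Const (f a))"
  by (induct A rule: infinite_finite_induct) (auto simp: Const_add)

lemma mpoly_expand: "finite S \<Longrightarrow> keys P \<subseteq> S \<Longrightarrow> P = (\<Sum>a\<in>S. single a (lookup P a))"
  by (rule poly_mapping_eqI) (auto simp: lookup_sum lookup_single when_def in_keys_iff)

lemma mult_expand:
  assumes "finite S" "keys P \<subseteq> S" "finite T" "keys Q \<subseteq> T"
  shows "P * Q = (\<Sum>a\<in>S. \<Sum>b\<in>T. single (a + b) (lookup P a * lookup Q b))"
proof -
  have "P * Q = (\<Sum>a\<in>S. single a (lookup P a)) * (\<Sum>b\<in>T. single b (lookup Q b))"
    using mpoly_expand[OF assms(1,2)] mpoly_expand[OF assms(3,4)] by metis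
  then show ?thesis
    by (simp add: sum_product mult_single)
qed

lemma keys_add_monom: "keys (a + b) = keys a \<union> keys (b :: nat \<Rightarrow>\<^sub>0 nat)"
  by (auto simp: in_keys_iff lookup_add)

definition eval_monom :: "(nat \<Rightarrow> 'a::comm_semiring_1 mpoly) \<Rightarrow> (nat \<Rightarrow>\<^sub>0 nat) \<Rightarrow> 'a mpoly" where
  "eval_monom \<sigma> mo = (\<Prod>i\<in>keys mo. \<sigma> i ^ lookup mo i)"

lemma subst_eq_sum_eval_monom: "subst \<sigma> P = (\<Sum>mo\<in>keys P. Const (lookup P mo) * eval_monom \<sigma> mo)"
  by (simp add: subst_def eval_monom_def)

lemma eval_monom_superset:
  "finite S \<Longrightarrow> keys mo \<subseteq> S \<Longrightarrow> eval_monom \<sigma> mo = (\<Prod>i\<in>S. \<sigma> i ^ lookup mo i)"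
  unfolding eval_monom_def by (rule prod.mono_neutral_left) (auto simp: in_keys_iff)

lemma eval_monom_add: "eval_monom \<sigma> (a + b) = eval_monom \<sigma> a * eval_monom \<sigma> b"
proof -
  let ?S = "keys a \<union> keys b"
  have "eval_monom \<sigma> (a + b) = (\<Prod>i\<in>?S. \<sigma> i ^ lookup a i * \<sigma> i ^ lookup b i)"
    by (subst eval_monom_superset[of ?S]) (auto simp: keys_add_monom lookup_add power_add)
  also have "\<dots> = eval_monom \<sigma> a * eval_monom \<sigma> b"
    by (subst (1 2) eval_monom_superset[of ?S]) (auto simp: prod.distrib)
  finally show ?thesis .
qed

lemma subst_superset:
  "finite S \<Longrightarrow> keys P \<subseteq> S \<Longrightarrow> subst \<sigma> P = (\<Sum>mo\<in>S. Const (lookup P mo) * eval_monom \<sigma> mo)"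
  unfolding subst_eq_sum_eval_monom by (rule sum.mono_neutral_left) (auto simp: in_keys_iff)

lemma subst_zero [simp]: "subst \<sigma> 0 = 0"
  by (simp add: subst_def)

lemma subst_add: "subst \<sigma> (P + Q) = subst \<sigma> P + subst \<sigma> Q"
proof -
  let ?S = "keys P \<union> keys Q"
  have "subst \<sigma> (P + Q) = (\<Sum>mo\<in>?S. Const (lookup P mo) * eval_monom \<sigma> mo
                                     + Const (lookup Q mo) * eval_monom \<sigma> mo)"
    by (subst subst_superset[of ?S])
       (auto dest: set_mp[OF keys_add] simp: lookup_add Const_add distrib_right)
  also have "\<dots> = subst \<sigma> P + subst \<sigma> Q"
    by (subst (1 2) subst_superset[of ?S]) (auto simp: sum.distrib)
  finally show ?thesis .
qed

lemma subst_sum: "subst \<sigma> (sum f A) = (\<Sum>a\<in>A. subst \<sigma> (f a))"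
  by (induct A rule: infinite_finite_induct) (auto simp: subst_add)

lemma subst_single: "subst \<sigma> (single a c) = Const c * eval_monom \<sigma> a"
  by (cases "c = 0") (auto simp: subst_eq_sum_eval_monom)

lemma subst_mult: "subst \<sigma> (P * Q) = subst \<sigma> P * subst \<sigma> Q"
proof -
  have "subst \<sigma> (P * Q) = (\<Sum>a\<in>keys P. \<Sum>b\<in>keys Q.
          Const (lookup P a * lookup Q b) * eval_monom \<sigma> (a + b))"
    by (subst mult_expand[of "keys P" P "keys Q" Q]) (auto simp: subst_sum subst_single)
  also have "\<dots> = (\<Sum>a\<in>keys P. \<Sum>b\<in>keys Q.
          (Const (lookup P a) * eval_monom \<sigma> a) * (Const (lookup Q b) * eval_monom \<sigma> b))"
    by (simp add: Const_mult eval_monom_add mult_ac)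
  also have "\<dots> = subst \<sigma> P * subst \<sigma> Q"
    by (simp add: subst_eq_sum_eval_monom sum_product)
  finally show ?thesis .
qed

lemma subst_Const [simp]: "subst \<sigma> (Const c) = Const c"
  by (simp add: Const_def subst_single eval_monom_def)

lemma subst_one [simp]: "subst \<sigma> 1 = 1"
  using subst_Const[of \<sigma> 1] by simp

lemma subst_Var [simp]: "subst \<sigma> (Var i) = \<sigma> i"
  by (simp add: Var_def subst_single eval_monom_def)

lemma subst_power: "subst \<sigma> (P ^ e) = subst \<sigma> P ^ e"
  by (induct e) (auto simp: subst_mult)

lemma subst_prod: "subst \<sigma> (prod f A) = (\<Prod>a\<in>A. subst \<sigma> (f a))"
  by (induct A rule: infinite_finite_induct) (auto simp: subst_mult)

lemma subst_diff: "subst \<sigma> (P - Q) = subst \<sigma> P - subst \<sigma> (Q :: 'a::comm_ring_1 mpoly)"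
  by (metis add_diff_cancel diff_add_cancel subst_add)

lemma Var_power: "Var i ^ e = (single (single i e) 1 :: 'a::comm_semiring_1 mpoly)"
  by (induct e) (simp_all add: Var_def mult_single single_add[symmetric] add.commute)

lemma prod_single_one: "(\<Prod>i\<in>A. single (f i) (1::'a::comm_semiring_1)) = single (sum f A) 1"
  by (induct A rule: infinite_finite_induct) (auto simp: mult_single)

lemma eval_monom_Var: "eval_monom Var mo = (single mo 1 :: 'a::comm_semiring_1 mpoly)"
proof -
  have "eval_monom Var mo = (\<Prod>i\<in>keys mo. (single (single i (lookup mo i)) 1 :: 'a mpoly))"
    by (simp add: eval_monom_def Var_power)
  also have "\<dots> = single (\<Sum>i\<in>keys mo. single i (lookup mo i)) 1"
    by (rule prod_single_one)
  also have "(\<Sum>i\<in>keys mo. single i (lookup mo i)) = mo"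
    by (rule mpoly_expand[symmetric]) auto
  finally show ?thesis .
qed

lemma subst_Var_id [simp]: "subst Var P = P"
proof -
  have "subst Var P = (\<Sum>mo\<in>keys P. single mo (lookup P mo))"
    by (simp add: subst_eq_sum_eval_monom eval_monom_Var Const_def mult_single)
  also have "\<dots> = P"
    by (rule mpoly_expand[symmetric]) auto
  finally show ?thesis .
qed

lemma subst_subst: "subst \<tau> (subst \<sigma> P) = subst (\<lambda>i. subst \<tau> (\<sigma> i)) P"
  by (simp only: subst_def[of \<sigma> P] subst_def[of "\<lambda>i. subst \<tau> (\<sigma> i)" P]
      subst_sum subst_mult subst_Const subst_prod subst_power)

lemma mpoly_induct [consumes 1, case_names Const Var add mult]:
  assumes "vars P \<subseteq> V"
    and Const: "\<And>c. Q (Const c)"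
    and Var: "\<And>i. i \<in> V \<Longrightarrow> Q (Var i)"
    and add: "\<And>P1 P2. Q P1 \<Longrightarrow> Q P2 \<Longrightarrow> Q (P1 + P2)"
    and mult: "\<And>P1 P2. Q P1 \<Longrightarrow> Q P2 \<Longrightarrow> Q (P1 * P2)"
  shows "Q P"
proof -
  have sum: "finite B \<Longrightarrow> (\<forall>a\<in>B. Q (f a)) \<Longrightarrow> Q (sum f B)" for B and f :: "'c \<Rightarrow> 'a mpoly"
    by (induct B rule: finite_induct) (auto intro: add Const[of 0, simplified])
  have prod: "finite B \<Longrightarrow> (\<forall>a\<in>B. Q (f a)) \<Longrightarrow> Q (prod f B)" for B and f :: "'c \<Rightarrow> 'a mpoly"
    by (induct B rule: finite_induct) (auto intro: mult Const[of 1, simplified])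
  have power: "Q X \<Longrightarrow> Q (X ^ e)" for X e
    by (induct e) (auto intro: mult Const[of 1, simplified])
  have "P = (\<Sum>mo\<in>keys P. Const (lookup P mo) * (\<Prod>i\<in>keys mo. Var i ^ lookup mo i))"
    using subst_Var_id[of P] by (simp add: subst_def)
  also have "Q \<dots>"
  proof (rule sum, simp, intro ballI mult Const prod, simp, intro ballI power Var)
    fix mo i assume "mo \<in> keys P" "i \<in> keys mo"
    then show "i \<in> V" using assms(1) by (auto simp: vars_def)
  qed
  finally show ?thesis .
qed

lemma vars_add: "vars (P + Q) \<subseteq> vars P \<union> vars (Q :: 'a::comm_monoid_add mpoly)"
  unfolding vars_def using keys_add[of P Q] by blast

lemma vars_mult: "vars (P * Q) \<subseteq> vars P \<union> vars (Q :: 'a::comm_semiring_1 mpoly)"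
  unfolding vars_def using keys_mult[of P Q] by (fastforce simp: keys_add_monom)

lemma vars_Const [simp]: "vars (Const (c::'a::comm_semiring_1)) = {}"
  by (simp add: vars_def Const_def)

lemma vars_one [simp]: "vars (1 :: 'a::comm_semiring_1 mpoly) = {}"
  using vars_Const[of "1::'a"] by simp

lemma vars_Var: "vars (Var i :: 'a::comm_semiring_1 mpoly) \<subseteq> {i}"
  by (simp add: vars_def Var_def)

lemma vars_Const_mult: "vars (Const c * P) \<subseteq> vars (P :: 'a::comm_semiring_1 mpoly)"
  using vars_mult[of "Const c" P] by simp

lemma vars_sum: "vars (sum f A) \<subseteq> (\<Union>a\<in>A. vars (f a :: 'a::comm_monoid_add mpoly))"
proof (induct A rule: infinite_finite_induct)
  case (insert x F) then show ?case using vars_add[of "f x" "sum f F"] by auto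
qed (auto simp: vars_def)

lemma vars_prod: "vars (prod f A) \<subseteq> (\<Union>a\<in>A. vars (f a :: 'a::comm_semiring_1 mpoly))"
proof (induct A rule: infinite_finite_induct)
  case (insert x F) then show ?case using vars_mult[of "f x" "prod f F"] by auto
qed auto

lemma vars_power: "vars (P ^ e) \<subseteq> vars (P :: 'a::comm_semiring_1 mpoly)"
proof (induct e)
  case (Suc e) then show ?case using vars_mult[of P "P ^ e"] by auto
qed auto

lemma vars_subst: "vars (subst \<sigma> P) \<subseteq> (\<Union>i\<in>vars P. vars (\<sigma> i :: 'a::comm_semiring_1 mpoly))"
proof
  fix x assume "x \<in> vars (subst \<sigma> P)"
  then obtain mo where mo: "mo \<in> keys P" "x \<in> vars (\<Prod>i\<in>keys mo. \<sigma> i ^ lookup mo i)"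
    unfolding subst_def using vars_sum vars_Const_mult by blast
  then obtain i where "i \<in> keys mo" "x \<in> vars (\<sigma> i)"
    using vars_prod vars_power by blast
  with mo(1) show "x \<in> (\<Union>i\<in>vars P. vars (\<sigma> i))"
    by (auto simp: vars_def)
qed

lemma vars_reduce: "vars (reduce p P) \<subseteq> vars P"
proof -
  have "keys (reduce p P) \<subseteq> keys P"
    by (auto simp: reduce_def in_keys_iff lookup_map)
  then show ?thesis
    unfolding vars_def by blast
qed

abbreviation of_int_mpoly :: "int mpoly \<Rightarrow> 'a::comm_ring_1 mpoly" where
  "of_int_mpoly \<equiv> Poly_Mapping.map of_int"

lemma lookup_of_int_mpoly: "lookup (of_int_mpoly P) k = of_int (lookup P k)"
  by (simp add: lookup_map)

lemma keys_of_int_mpoly: "keys (of_int_mpoly P :: 'a::{comm_ring_1, ring_char_0} mpoly) = keys P"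
  by (auto simp: in_keys_iff lookup_of_int_mpoly)

lemma vars_of_int_mpoly: "vars (of_int_mpoly P :: 'a::{comm_ring_1, ring_char_0} mpoly) = vars P"
  by (simp add: vars_def keys_of_int_mpoly)

lemma of_int_mpoly_add: "of_int_mpoly (P + Q) = of_int_mpoly P + of_int_mpoly Q"
  by (rule poly_mapping_eqI) (simp add: lookup_of_int_mpoly lookup_add)

lemma of_int_mpoly_zero [simp]: "of_int_mpoly 0 = 0"
  by (rule poly_mapping_eqI) (simp add: lookup_of_int_mpoly)

lemma of_int_mpoly_sum: "of_int_mpoly (sum f A) = (\<Sum>a\<in>A. of_int_mpoly (f a))"
  by (induct A rule: infinite_finite_induct) (auto simp: of_int_mpoly_add)

lemma of_int_mpoly_single: "of_int_mpoly (single a c) = single a (of_int c)"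
  by (rule poly_mapping_eqI) (simp add: lookup_of_int_mpoly lookup_single when_def)

lemma of_int_mpoly_mult: "of_int_mpoly (P * Q) = of_int_mpoly P * of_int_mpoly Q"
proof -
  have keys: "keys (of_int_mpoly R :: 'a mpoly) \<subseteq> keys R" for R
    by (auto simp: in_keys_iff lookup_of_int_mpoly)
  have "of_int_mpoly (P * Q)
      = of_int_mpoly (\<Sum>a\<in>keys P. \<Sum>b\<in>keys Q. single (a + b) (lookup P a * lookup Q b))"
    by (subst mult_expand[of "keys P" P "keys Q" Q]) auto
  also have "\<dots> = (\<Sum>a\<in>keys P. \<Sum>b\<in>keys Q.
      single (a + b) (lookup (of_int_mpoly P :: 'a mpoly) a * lookup (of_int_mpoly Q) b))"
    by (simp add: of_int_mpoly_sum of_int_mpoly_single lookup_of_int_mpoly)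
  also have "\<dots> = of_int_mpoly P * of_int_mpoly Q"
    by (rule mult_expand[symmetric]) (use keys in auto)
  finally show ?thesis .
qed

lemma of_int_mpoly_Const: "of_int_mpoly (Const c) = Const (of_int c)"
  by (simp add: Const_def of_int_mpoly_single)

lemma of_int_mpoly_Var: "of_int_mpoly (Var i) = Var i"
  by (simp add: Var_def of_int_mpoly_single)

lemma of_int_mpoly_one: "of_int_mpoly 1 = 1"
  using of_int_mpoly_Const[of 1] by simp

lemma of_int_mpoly_power: "of_int_mpoly (P ^ e) = of_int_mpoly P ^ e"
  by (induct e) (auto simp: of_int_mpoly_mult of_int_mpoly_one)

lemma of_int_mpoly_prod: "of_int_mpoly (prod f A) = (\<Prod>a\<in>A. of_int_mpoly (f a))"
  by (induct A rule: infinite_finite_induct) (auto simp: of_int_mpoly_mult of_int_mpoly_one)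

lemma of_int_mpoly_subst:
  "of_int_mpoly (subst \<sigma> P) = subst (\<lambda>i. of_int_mpoly (\<sigma> i)) (of_int_mpoly P :: 'a::{comm_ring_1, ring_char_0} mpoly)"
  by (simp add: subst_def of_int_mpoly_sum of_int_mpoly_mult of_int_mpoly_Const of_int_mpoly_prod
      of_int_mpoly_power keys_of_int_mpoly lookup_of_int_mpoly)

section \<open>Partial derivatives\<close>

definition pdiff :: "nat \<Rightarrow> 'a::comm_semiring_1 mpoly \<Rightarrow> 'a mpoly" where
  "pdiff i P = Abs_poly_mapping (\<lambda>mo. of_nat (lookup mo i + 1) * lookup P (mo + single i 1))"

lemma lookup_pdiff: "lookup (pdiff i P) mo = of_nat (lookup mo i + 1) * lookup P (mo + single i 1)"
proof -
  have "{mo. of_nat (lookup mo i + 1) * lookup P (mo + single i 1) \<noteq> 0} \<subseteq> (\<lambda>m. m - single i 1) ` keys P"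
  proof
    fix mo assume "mo \<in> {mo. of_nat (lookup mo i + 1) * lookup P (mo + single i 1) \<noteq> 0}"
    then have "mo + single i 1 \<in> keys P"
      by (auto simp: in_keys_iff)
    then show "mo \<in> (\<lambda>m. m - single i 1) ` keys P"
      by (rule rev_image_eqI) simp
  qed
  then have "finite {mo. of_nat (lookup mo i + 1) * lookup P (mo + single i 1) \<noteq> 0}"
    by (rule finite_subset) simp
  then show ?thesis
    by (simp add: pdiff_def)
qed

lemma pdiff_add: "pdiff i (P + Q) = pdiff i P + pdiff i Q"
  by (rule poly_mapping_eqI) (simp add: lookup_pdiff lookup_add distrib_left)

lemma pdiff_zero [simp]: "pdiff i 0 = 0"
  by (rule poly_mapping_eqI) (simp add: lookup_pdiff)

lemma pdiff_diff: "pdiff i (P - Q) = pdiff i P - pdiff i (Q :: 'a::comm_ring_1 mpoly)"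
  by (rule poly_mapping_eqI) (simp add: lookup_pdiff lookup_minus right_diff_distrib)

lemma pdiff_sum: "pdiff i (sum f A) = (\<Sum>a\<in>A. pdiff i (f a))"
  by (induct A rule: infinite_finite_induct) (auto simp: pdiff_add)

lemma monom_minus_plus_single:
  "lookup a i \<noteq> 0 \<Longrightarrow> a - single i 1 + single i 1 = (a :: nat \<Rightarrow>\<^sub>0 nat)"
  by (rule poly_mapping_eqI) (auto simp: lookup_add lookup_minus lookup_single when_def)

lemma pdiff_single: "pdiff i (single a c) = single (a - single i 1) (of_nat (lookup a i) * c)"
proof (rule poly_mapping_eqI)
  fix mo
  show "lookup (pdiff i (single a c)) mo = lookup (single (a - single i 1) (of_nat (lookup a i) * c)) mo"
  proof (cases "a = mo + single i 1")
    case False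
    then have "lookup a i = 0 \<or> a - single i 1 \<noteq> mo"
      using monom_minus_plus_single by metis
    then show ?thesis
      using False by (auto simp: lookup_pdiff lookup_single when_def)
  qed (simp add: lookup_pdiff lookup_add lookup_single)
qed

lemma pdiff_Const [simp]: "pdiff i (Const c) = 0"
  by (simp add: Const_def pdiff_single)

lemma pdiff_Var: "pdiff i (Var j) = (if i = j then 1 else 0)"
  by (auto simp: Var_def pdiff_single lookup_single)

lemma pdiff_mult_single:
  "pdiff i (single a c * single b d) = pdiff i (single a c) * single b d + single a c * pdiff i (single b d)"
proof -
  let ?e = "single i 1 :: nat \<Rightarrow>\<^sub>0 nat"
  have shift: "single (a - ?e + b) (of_nat (lookup a i) * x) = single (a + b - ?e) (of_nat (lookup a i) * x)"
    for a b and x :: 'a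
  proof (cases "lookup a i = 0")
    case False
    then have "a - ?e + b = a + b - ?e"
      by (intro poly_mapping_eqI) (auto simp: lookup_add lookup_minus lookup_single when_def)
    then show ?thesis by simp
  qed simp
  have "pdiff i (single a c) * single b d + single a c * pdiff i (single b d)
      = single (a - ?e + b) (of_nat (lookup a i) * (c * d)) + single (b - ?e + a) (of_nat (lookup b i) * (c * d))"
    by (simp add: pdiff_single mult_single ac_simps)
  also have "\<dots> = single (a + b - ?e) (of_nat (lookup a i) * (c * d))
                  + single (b + a - ?e) (of_nat (lookup b i) * (c * d))"
    by (simp only: shift)
  also have "\<dots> = pdiff i (single a c * single b d)"
    by (simp add: pdiff_single mult_single lookup_add distrib_right add.commute flip: single_add)
  finally show ?thesis ..
qed

lemma pdiff_mult_sums: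
  assumes "\<And>a b. a \<in> A \<Longrightarrow> b \<in> B \<Longrightarrow> pdiff i (f a * g b) = pdiff i (f a) * g b + f a * pdiff i (g b)"
  shows "pdiff i (sum f A * sum g B) = pdiff i (sum f A) * sum g B + sum f A * pdiff i (sum g B)"
proof -
  have "pdiff i (sum f A * sum g B) = (\<Sum>a\<in>A. \<Sum>b\<in>B. pdiff i (f a) * g b + f a * pdiff i (g b))"
    using assms by (simp add: sum_product pdiff_sum)
  then show ?thesis
    by (simp add: sum.distrib sum_product pdiff_sum)
qed

lemma pdiff_mult: "pdiff i (P * Q) = pdiff i P * Q + P * pdiff i Q"
proof -
  have "pdiff i ((\<Sum>a\<in>keys P. single a (lookup P a)) * (\<Sum>b\<in>keys Q. single b (lookup Q b)))
      = pdiff i (\<Sum>a\<in>keys P. single a (lookup P a)) * (\<Sum>b\<in>keys Q. single b (lookup Q b))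
        + (\<Sum>a\<in>keys P. single a (lookup P a)) * pdiff i (\<Sum>b\<in>keys Q. single b (lookup Q b))"
    by (rule pdiff_mult_sums) (rule pdiff_mult_single)
  then show ?thesis
    by (simp flip: mpoly_expand[OF finite_keys order_refl])
qed

lemma pdiff_Const_mult: "pdiff i (Const c * P) = Const c * pdiff i P"
  by (simp add: pdiff_mult)

lemma pdiff_of_int_mpoly: "pdiff i (of_int_mpoly P) = of_int_mpoly (pdiff i P)"
  by (rule poly_mapping_eqI) (simp add: lookup_pdiff lookup_of_int_mpoly)

lemma pdiff_subst:
  assumes "finite V" "vars P \<subseteq> V"
  shows "pdiff k (subst \<sigma> P) = (\<Sum>i\<in>V. subst \<sigma> (pdiff i P) * pdiff k (\<sigma> i))"
  using assms(2)
proof (induction rule: mpoly_induct)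
  case (Var j)
  have "subst \<sigma> (pdiff i (Var j)) * pdiff k (\<sigma> i) = (if i = j then pdiff k (\<sigma> j) else 0)" for i
    by (simp add: pdiff_Var)
  then show ?case
    using Var assms(1) by simp
next
  case (add P1 P2)
  then show ?case
    by (simp add: subst_add pdiff_add distrib_right sum.distrib)
next
  case (mult P1 P2)
  have "(\<Sum>i\<in>V. subst \<sigma> (pdiff i (P1 * P2)) * pdiff k (\<sigma> i))
     = (\<Sum>i\<in>V. (subst \<sigma> (pdiff i P1) * pdiff k (\<sigma> i)) * subst \<sigma> P2
                + subst \<sigma> P1 * (subst \<sigma> (pdiff i P2) * pdiff k (\<sigma> i)))"
    by (intro sum.cong refl) (simp add: pdiff_mult subst_add subst_mult algebra_simps)
  also have "\<dots> = pdiff k (subst \<sigma> (P1 * P2))"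
    by (simp add: sum.distrib mult subst_mult pdiff_mult sum_distrib_left sum_distrib_right)
  finally show ?case ..
qed simp

text \<open>Characteristic 0 is needed here (think of x^p); the converse holds in every characteristic.\<close>

lemma notin_vars_if_pdiff_eq_0:
  fixes P :: "'a::{comm_semiring_1, semiring_char_0, semiring_no_zero_divisors} mpoly"
  assumes "pdiff j P = 0"
  shows "j \<notin> vars P"
proof
  assume "j \<in> vars P"
  then obtain mo where mo: "mo \<in> keys P" "lookup mo j \<noteq> 0"
    unfolding vars_def by (auto simp: in_keys_iff)
  moreover have "mo - single j 1 + single j 1 = mo"
    using mo(2) by (rule monom_minus_plus_single)
  ultimately have "lookup (pdiff j P) (mo - single j 1) = of_nat (lookup mo j) * lookup P mo"
    by (simp only: lookup_pdiff) (simp add: lookup_minus)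
  also have "\<dots> \<noteq> 0"
    using mo by (simp add: in_keys_iff)
  finally show False
    using assms by simp
qed

section \<open>Linear changes of variables\<close>

definition lin_subst_var :: "nat \<Rightarrow> (nat \<Rightarrow> nat \<Rightarrow> 'a::comm_semiring_1) \<Rightarrow> nat \<Rightarrow> 'a mpoly" where
  "lin_subst_var n A i = (if i \<le> n then (\<Sum>j\<le>n. Const (A i j) * Var j) else Var i)"

lemma lin_subst_eq_subst: "lin_subst n A P = subst (lin_subst_var n A) P"
  unfolding lin_subst_def lin_subst_var_def[abs_def] ..

lemma lin_subst_cong:
  "(\<And>i j. i \<le> n \<Longrightarrow> j \<le> n \<Longrightarrow> A i j = A' i j) \<Longrightarrow> lin_subst n A P = lin_subst n A' P"
  unfolding lin_subst_def by (intro arg_cong[of _ _ "\<lambda>\<sigma>. subst \<sigma> P"] ext) auto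

lemma vars_lin_subst_var:
  assumes "i \<le> n"
  shows "vars (lin_subst_var n A i) \<subseteq> {..n}"
proof -
  have "vars (lin_subst_var n A i) \<subseteq> (\<Union>j\<le>n. vars (Const (A i j) * Var j))"
    using assms unfolding lin_subst_var_def by (simp add: vars_sum)
  also have "\<dots> \<subseteq> (\<Union>j\<le>n. {j})"
    using vars_Const_mult vars_Var by (intro UN_mono order_refl) (blast intro: order_trans)
  finally show ?thesis
    by auto
qed

lemma vars_lin_subst: "vars P \<subseteq> {..n} \<Longrightarrow> vars (lin_subst n A P) \<subseteq> {..n}"
  unfolding lin_subst_eq_subst using vars_subst[of "lin_subst_var n A" P] vars_lin_subst_var by blast

lemma lin_subst_var_id:
  assumes "i \<le> n"
  shows "lin_subst_var n (\<lambda>i j. if i = j then 1 else 0) i = Var i"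
proof -
  have "(\<Sum>j\<le>n. Const (if i = j then 1 else 0) * Var j) = (\<Sum>j\<le>n. if j = i then Var j else 0)"
    by (rule sum.cong) auto
  with assms show ?thesis
    by (simp add: lin_subst_var_def)
qed

lemma lin_subst_lin_subst:
  "lin_subst n B (lin_subst n A P) = lin_subst n (\<lambda>i m. \<Sum>j\<le>n. A i j * B j m) P"
proof -
  have "subst (lin_subst_var n B) (lin_subst_var n A i) = lin_subst_var n (\<lambda>i m. \<Sum>j\<le>n. A i j * B j m) i"
    for i
  proof (cases "i \<le> n")
    case True
    have "subst (lin_subst_var n B) (lin_subst_var n A i)
        = (\<Sum>j\<le>n. \<Sum>m\<le>n. Const (A i j) * Const (B j m) * Var m)"
      using True by (simp add: lin_subst_var_def subst_sum subst_mult sum_distrib_left mult.assoc)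
    also have "\<dots> = (\<Sum>m\<le>n. Const (\<Sum>j\<le>n. A i j * B j m) * Var m)"
      by (subst sum.swap) (simp add: Const_sum Const_mult sum_distrib_right)
    finally show ?thesis
      using True by (simp add: lin_subst_var_def)
  qed (simp add: lin_subst_var_def)
  then show ?thesis
    by (simp add: lin_subst_eq_subst subst_subst)
qed

lemma of_int_mpoly_lin_subst:
  "of_int_mpoly (lin_subst n A P) = lin_subst n (\<lambda>i j. of_int (A i j))
     (of_int_mpoly P :: 'a::{comm_ring_1, ring_char_0} mpoly)"
proof -
  have "of_int_mpoly (lin_subst_var n A i) = (lin_subst_var n (\<lambda>i j. of_int (A i j)) i :: 'a mpoly)" for i
    by (simp add: lin_subst_var_def of_int_mpoly_sum of_int_mpoly_mult of_int_mpoly_Const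
        of_int_mpoly_Var)
  then show ?thesis
    by (simp only: lin_subst_eq_subst of_int_mpoly_subst)
qed

lemma pdiff_lin_subst_var:
  assumes "i \<le> n" "l \<le> n"
  shows "pdiff l (lin_subst_var n A i) = Const (A i l)"
proof -
  have "(\<Sum>j\<le>n. Const (A i j) * pdiff l (Var j)) = (\<Sum>j\<le>n. if j = l then Const (A i j) else 0)"
    by (rule sum.cong) (auto simp: pdiff_Var)
  with assms show ?thesis
    by (simp add: lin_subst_var_def pdiff_sum pdiff_Const_mult)
qed

lemma pdiff_lin_subst:
  assumes "vars P \<subseteq> {..n}" "l \<le> n"
  shows "pdiff l (lin_subst n A P) = (\<Sum>i\<le>n. lin_subst n A (pdiff i P) * Const (A i l))"
proof -
  have "pdiff l (lin_subst n A P) = (\<Sum>i\<le>n. lin_subst n A (pdiff i P) * pdiff l (lin_subst_var n A i))"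
    unfolding lin_subst_eq_subst using assms(1) by (rule pdiff_subst[OF finite_atMost])
  then show ?thesis
    using assms(2) by (simp add: pdiff_lin_subst_var)
qed

lemma pdiff_combination_lin_subst:
  assumes "vars G \<subseteq> {..n}" "k \<le> n"
    and "\<And>i. i \<le> n \<Longrightarrow> (\<Sum>l\<le>n. B i l * a l) = (if i = k then d else 0)"
  shows "(\<Sum>l\<le>n. Const (a l) * pdiff l (lin_subst n B G)) = lin_subst n B (pdiff k G) * Const d"
proof -
  let ?X = "\<lambda>i. lin_subst n B (pdiff i G)"
  have "(\<Sum>l\<le>n. Const (a l) * pdiff l (lin_subst n B G)) = (\<Sum>l\<le>n. \<Sum>i\<le>n. ?X i * Const (B i l * a l))"
    using assms(1) by (intro sum.cong refl) (simp add: pdiff_lin_subst sum_distrib_left Const_mult mult_ac)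
  also have "\<dots> = (\<Sum>i\<le>n. ?X i * Const (\<Sum>l\<le>n. B i l * a l))"
    by (subst sum.swap) (simp add: Const_sum sum_distrib_left)
  also have "\<dots> = (\<Sum>i\<le>n. if i = k then ?X i * Const d else 0)"
    using assms(3) by (intro sum.cong refl) simp
  finally show ?thesis
    using assms(2) by simp
qed

section \<open>Orders\<close>

definition inverse_matrices :: "nat \<Rightarrow> (nat \<Rightarrow> nat \<Rightarrow> 'a::comm_semiring_1) \<Rightarrow> (nat \<Rightarrow> nat \<Rightarrow> 'a) \<Rightarrow> bool" where
  "inverse_matrices n A B \<longleftrightarrow> (\<forall>i\<le>n. \<forall>j\<le>n. (\<Sum>k\<le>n. A i k * B k j) = (if i = j then 1 else 0))"

definition inverse_matrices_mod :: "int \<Rightarrow> nat \<Rightarrow> (nat \<Rightarrow> nat \<Rightarrow> int) \<Rightarrow> (nat \<Rightarrow> nat \<Rightarrow> int) \<Rightarrow> bool" where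
  "inverse_matrices_mod p n A B \<longleftrightarrow>
     (\<forall>i\<le>n. \<forall>j\<le>n. [(\<Sum>k\<le>n. A i k * B k j) = (if i = j then 1 else 0)] (mod p))"

lemma sum_delta_mult:
  assumes "i \<le> (n::nat)"
  shows "(\<Sum>k\<le>n. (if i = k then 1 else 0) * f k) = (f i :: 'a::semiring_1)"
proof -
  have "(\<Sum>k\<le>n. (if i = k then 1 else 0) * f k) = (\<Sum>k\<le>n. if k = i then f k else 0)"
    by (rule sum.cong) auto
  also have "\<dots> = f i"
    using assms by simp
  finally show ?thesis .
qed

lemma inverse_matrices_id: "inverse_matrices n (\<lambda>i j. if i = j then 1 else 0) (\<lambda>i j. if i = j then 1 else 0)"
  by (simp add: inverse_matrices_def sum_delta_mult)

lemma inverse_matrices_mod_id: "inverse_matrices_mod p n (\<lambda>i j. if i = j then 1 else 0) (\<lambda>i j. if i = j then 1 else 0)"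
  by (simp add: inverse_matrices_mod_def sum_delta_mult)

lemma card_le_iff_missing: "X \<subseteq> {..n} \<Longrightarrow> card X \<le> n \<longleftrightarrow> (\<exists>k\<le>n. k \<notin> X)"
proof
  assume "X \<subseteq> {..n}" "card X \<le> n"
  then have "X \<noteq> {..n}"
    by auto
  with \<open>X \<subseteq> {..n}\<close> show "\<exists>k\<le>n. k \<notin> X"
    by auto
next
  assume "X \<subseteq> {..n}" "\<exists>k\<le>n. k \<notin> X"
  then obtain k where "k \<le> n" "X \<subseteq> {..n} - {k}"
    by auto
  then show "card X \<le> n"
    using card_mono[of "{..n} - {k}" X] by simp
qed

lemma order_field_def':
  "order_field n P = (LEAST m. \<exists>A B. inverse_matrices n A B \<and> card (vars (lin_subst n A P)) \<le> m)"
  by (simp add: order_field_def inverse_matrices_def)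

lemma order_mod_def':
  "order_mod p n F = (LEAST m. \<exists>A B. inverse_matrices_mod p n A B
                                 \<and> card (vars (reduce p (lin_subst n A F))) \<le> m)"
  by (simp add: order_mod_def inverse_matrices_mod_def cong_def)

lemma card_le_Suc: "X \<subseteq> {..n} \<Longrightarrow> card X \<le> Suc n"
  using card_mono[of "{..n}" X] by simp

lemma order_field_le_Suc: "vars P \<subseteq> {..n} \<Longrightarrow> order_field n (P :: 'a::field mpoly) \<le> Suc n"
  unfolding order_field_def'
  by (rule Least_le) (use inverse_matrices_id card_le_Suc[OF vars_lin_subst] in blast)

lemma order_mod_le_Suc: "vars F \<subseteq> {..n} \<Longrightarrow> order_mod p n F \<le> Suc n"
  unfolding order_mod_def'
  by (rule Least_le)
    (use inverse_matrices_mod_id card_le_Suc[OF order_trans[OF vars_reduce vars_lin_subst]] in blast)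

lemma Least_card_le_iff:
  assumes "\<And>A. V A \<subseteq> {..n}" and "Q A0 B0"
  shows "(LEAST m. \<exists>A B. Q A B \<and> card (V A) \<le> m) \<le> n \<longleftrightarrow> (\<exists>A B k. Q A B \<and> k \<le> n \<and> k \<notin> V A)"
proof
  assume le: "(LEAST m. \<exists>A B. Q A B \<and> card (V A) \<le> m) \<le> n"
  have "\<exists>A B. Q A B \<and> card (V A) \<le> (LEAST m. \<exists>A B. Q A B \<and> card (V A) \<le> m)"
    by (rule LeastI_ex) (use assms(2) in blast)
  with le show "\<exists>A B k. Q A B \<and> k \<le> n \<and> k \<notin> V A"
    using card_le_iff_missing[OF assms(1)] by (meson le_trans)
next
  assume "\<exists>A B k. Q A B \<and> k \<le> n \<and> k \<notin> V A"
  then have "\<exists>A B. Q A B \<and> card (V A) \<le> n"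
    using card_le_iff_missing[OF assms(1)] by blast
  then show "(LEAST m. \<exists>A B. Q A B \<and> card (V A) \<le> m) \<le> n"
    by (rule Least_le)
qed

lemma order_field_le_iff:
  fixes P :: "'a::field mpoly"
  assumes "vars P \<subseteq> {..n}"
  shows "order_field n P \<le> n \<longleftrightarrow>
    (\<exists>A B k. inverse_matrices n A B \<and> k \<le> n \<and> k \<notin> vars (lin_subst n A P))"
  unfolding order_field_def'
  by (rule Least_card_le_iff, rule vars_lin_subst[OF assms], rule inverse_matrices_id)

lemma order_mod_le_iff:
  assumes "vars F \<subseteq> {..n}"
  shows "order_mod p n F \<le> n \<longleftrightarrow>
    (\<exists>A B k. inverse_matrices_mod p n A B \<and> k \<le> n \<and> k \<notin> vars (reduce p (lin_subst n A F)))"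
  unfolding order_mod_def'
  by (rule Least_card_le_iff, rule order_trans[OF vars_reduce vars_lin_subst[OF assms]],
      rule inverse_matrices_mod_id)

section \<open>Reduction modulo p\<close>

definition mpoly_cong :: "int \<Rightarrow> int mpoly \<Rightarrow> int mpoly \<Rightarrow> bool" where
  "mpoly_cong p P Q \<longleftrightarrow> (\<exists>R. P - Q = Const p * R)"

lemma mpoly_cong_iff_dvd: "mpoly_cong p P Q \<longleftrightarrow> (\<forall>mo. p dvd lookup P mo - lookup Q mo)"
proof
  assume "mpoly_cong p P Q"
  then obtain R where "P - Q = Const p * R"
    by (auto simp: mpoly_cong_def)
  then have "lookup P mo - lookup Q mo = p * lookup R mo" for mo
    by (metis lookup_Const_mult lookup_minus)
  then show "\<forall>mo. p dvd lookup P mo - lookup Q mo"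
    by simp
next
  assume dvd: "\<forall>mo. p dvd lookup P mo - lookup Q mo"
  have "P - Q = Const p * Poly_Mapping.map (\<lambda>c. c div p) (P - Q)"
    by (rule poly_mapping_eqI) (use dvd in \<open>simp add: lookup_Const_mult lookup_map lookup_minus\<close>)
  then show "mpoly_cong p P Q"
    unfolding mpoly_cong_def ..
qed

lemma mpoly_cong_refl: "mpoly_cong p P P"
  unfolding mpoly_cong_def by (rule exI[of _ 0]) simp

lemma mpoly_cong_trans [trans]: "mpoly_cong p P Q \<Longrightarrow> mpoly_cong p Q R \<Longrightarrow> mpoly_cong p P R"
  unfolding mpoly_cong_def
proof (elim exE)
  fix R1 R2 assume "P - Q = Const p * R1" "Q - R = Const p * R2"
  then have "P - R = Const p * (R1 + R2)"
    by (simp add: algebra_simps)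
  then show "\<exists>R'. P - R = Const p * R'" ..
qed

lemma mpoly_cong_add:
  "mpoly_cong p P1 Q1 \<Longrightarrow> mpoly_cong p P2 Q2 \<Longrightarrow> mpoly_cong p (P1 + P2) (Q1 + Q2)"
  unfolding mpoly_cong_def
proof (elim exE)
  fix R1 R2 assume "P1 - Q1 = Const p * R1" "P2 - Q2 = Const p * R2"
  then have "P1 + P2 - (Q1 + Q2) = Const p * (R1 + R2)"
    by (simp add: algebra_simps)
  then show "\<exists>R. P1 + P2 - (Q1 + Q2) = Const p * R" ..
qed

lemma mpoly_cong_mult:
  "mpoly_cong p P1 Q1 \<Longrightarrow> mpoly_cong p P2 Q2 \<Longrightarrow> mpoly_cong p (P1 * P2) (Q1 * Q2)"
  unfolding mpoly_cong_def
proof (elim exE)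
  fix R1 R2 assume "P1 - Q1 = Const p * R1" "P2 - Q2 = Const p * R2"
  moreover have "P1 * P2 - Q1 * Q2 = P1 * (P2 - Q2) + (P1 - Q1) * Q2"
    by (simp add: algebra_simps)
  ultimately have "P1 * P2 - Q1 * Q2 = Const p * (P1 * R2 + R1 * Q2)"
    by (simp add: algebra_simps)
  then show "\<exists>R. P1 * P2 - Q1 * Q2 = Const p * R" ..
qed

lemma mpoly_cong_sum:
  "(\<And>a. a \<in> A \<Longrightarrow> mpoly_cong p (f a) (g a)) \<Longrightarrow> mpoly_cong p (sum f A) (sum g A)"
  by (induct A rule: infinite_finite_induct) (auto simp: mpoly_cong_add mpoly_cong_refl)

lemma mpoly_cong_Const: "[c = d] (mod p) \<Longrightarrow> mpoly_cong p (Const c) (Const d)"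
  by (auto simp: mpoly_cong_iff_dvd cong_iff_dvd_diff Const_def lookup_single when_def)

lemma mpoly_cong_subst: "mpoly_cong p P Q \<Longrightarrow> mpoly_cong p (subst \<sigma> P) (subst \<sigma> Q)"
  unfolding mpoly_cong_def by (metis subst_diff subst_mult subst_Const)

lemma mpoly_cong_pdiff: "mpoly_cong p P Q \<Longrightarrow> mpoly_cong p (pdiff i P) (pdiff i Q)"
  unfolding mpoly_cong_def by (metis pdiff_diff pdiff_Const_mult)

lemma mpoly_cong_subst_args:
  assumes "\<And>i. i \<in> vars P \<Longrightarrow> mpoly_cong p (\<sigma> i) (\<tau> i)"
  shows "mpoly_cong p (subst \<sigma> P) (subst \<tau> P)"
proof -
  have "vars P \<subseteq> vars P" ..
  then show ?thesis
  proof (induction rule: mpoly_induct)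
    case (add P1 P2)
    then show ?case by (simp add: subst_add mpoly_cong_add)
  next
    case (mult P1 P2)
    then show ?case by (simp add: subst_mult mpoly_cong_mult)
  qed (simp_all add: assms mpoly_cong_refl)
qed

lemma pdiff_cong_0_if_notin_vars_reduce:
  assumes "k \<notin> vars (reduce p G)"
  shows "mpoly_cong p (pdiff k G) 0"
  unfolding mpoly_cong_iff_dvd
proof
  fix mo :: "nat \<Rightarrow>\<^sub>0 nat"
  have "k \<in> keys (mo + single k 1)"
    by (simp add: in_keys_iff lookup_add)
  with assms have "mo + single k 1 \<notin> keys (reduce p G)"
    unfolding vars_def by blast
  then have "p dvd lookup G (mo + single k 1)"
    by (simp add: in_keys_iff reduce_def lookup_map dvd_eq_mod_eq_0)
  then show "p dvd lookup (pdiff k G) mo - lookup 0 mo"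
    by (simp add: lookup_pdiff)
qed

lemma lin_subst_inverse_mod_cong:
  assumes "vars F \<subseteq> {..n}" "inverse_matrices_mod p n A B"
  shows "mpoly_cong p F (lin_subst n B (lin_subst n A F))"
proof -
  define C where "C = (\<lambda>i m. \<Sum>j\<le>n. A i j * B j m)"
  have "mpoly_cong p (Var i) (lin_subst_var n C i)" if "i \<in> vars F" for i
  proof -
    have i: "i \<le> n"
      using that assms(1) by auto
    have "[(if i = j then 1 else 0) = C i j] (mod p)" if "j \<le> n" for j
      using i that assms(2) by (simp add: C_def inverse_matrices_mod_def cong_sym_eq)
    then have "mpoly_cong p (lin_subst_var n (\<lambda>i j. if i = j then 1 else 0) i) (lin_subst_var n C i)"
      unfolding lin_subst_var_def if_P[OF i]
      by (intro mpoly_cong_sum mpoly_cong_mult mpoly_cong_refl mpoly_cong_Const) auto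
    with i show ?thesis
      by (simp add: lin_subst_var_id)
  qed
  then have "mpoly_cong p (subst Var F) (subst (lin_subst_var n C) F)"
    by (rule mpoly_cong_subst_args)
  then show ?thesis
    unfolding lin_subst_lin_subst by (simp add: lin_subst_eq_subst C_def)
qed

text \<open>If x_k is absent from F(Ax) mod p, differentiate F(x) \<equiv> F(ABx) along a vector a that B
  maps to a multiple of e_k.\<close>

lemma pdiff_combination_cong_0:
  assumes "vars F \<subseteq> {..n}" "inverse_matrices_mod p n A B"
    and "k \<le> n" "k \<notin> vars (reduce p (lin_subst n A F))"
    and "\<And>i. i \<le> n \<Longrightarrow> (\<Sum>l\<le>n. B i l * a l) = (if i = k then d else 0)"
  shows "mpoly_cong p (\<Sum>l\<le>n. Const (a l) * pdiff l F) 0"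
proof -
  let ?G = "lin_subst n A F"
  have "mpoly_cong p (\<Sum>l\<le>n. Const (a l) * pdiff l F) (\<Sum>l\<le>n. Const (a l) * pdiff l (lin_subst n B ?G))"
    using lin_subst_inverse_mod_cong[OF assms(1,2)]
    by (intro mpoly_cong_sum mpoly_cong_mult mpoly_cong_refl mpoly_cong_pdiff)
  also have "(\<Sum>l\<le>n. Const (a l) * pdiff l (lin_subst n B ?G)) = lin_subst n B (pdiff k ?G) * Const d"
    using vars_lin_subst[OF assms(1)] assms(3,5) by (rule pdiff_combination_lin_subst)
  also have "mpoly_cong p \<dots> (lin_subst n B 0 * Const d)"
    using pdiff_cong_0_if_notin_vars_reduce[OF assms(4)]
    unfolding lin_subst_eq_subst by (intro mpoly_cong_mult mpoly_cong_subst mpoly_cong_refl)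
  finally show ?thesis
    by (simp add: lin_subst_eq_subst)
qed

lemma det_cong:
  fixes M M' :: "int mat"
  assumes "M \<in> carrier_mat N N" "M' \<in> carrier_mat N N"
    and "\<And>i j. i < N \<Longrightarrow> j < N \<Longrightarrow> [M $$ (i, j) = M' $$ (i, j)] (mod p)"
  shows "[det M = det M'] (mod p)"
proof -
  have "[of_int (sign \<pi>) * (\<Prod>i = 0..<N. M $$ (i, \<pi> i)) = of_int (sign \<pi>) * (\<Prod>i = 0..<N. M' $$ (i, \<pi> i))] (mod p)"
    if "\<pi> permutes {0..<N}" for \<pi>
    using assms(3) permutes_in_image[OF that] by (intro cong_scalar_left cong_prod) auto
  then show ?thesis
    unfolding det_def'[OF assms(1)] det_def'[OF assms(2)] by (intro cong_sum) auto
qed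

lemma index_mult_mat_atMost:
  assumes "M \<in> carrier_mat (Suc n) (Suc n)" "M' \<in> carrier_mat (Suc n) (Suc n)" "i \<le> n" "j \<le> n"
  shows "(M * M') $$ (i, j) = (\<Sum>k\<le>n. M $$ (i, k) * M' $$ (k, j))"
  using assms by (simp add: index_mult_mat scalar_prod_def atLeast0LessThan lessThan_Suc_atMost)

lemma not_dvd_det_if_inverse_mod:
  assumes "prime p" "inverse_matrices_mod p n A B"
  shows "\<not> p dvd det (mat (Suc n) (Suc n) (\<lambda>(i, j). B i j))"
proof
  let ?A = "mat (Suc n) (Suc n) (\<lambda>(i, j). A i j)" and ?B = "mat (Suc n) (Suc n) (\<lambda>(i, j). B i j)"
  have "[det (?A * ?B) = det (1\<^sub>m (Suc n))] (mod p)"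
  proof (rule det_cong)
    fix i j assume "i < Suc n" "j < Suc n"
    then have ij: "i \<le> n" "j \<le> n"
      by auto
    have "(?A * ?B) $$ (i, j) = (\<Sum>k\<le>n. ?A $$ (i, k) * ?B $$ (k, j))"
      by (rule index_mult_mat_atMost) (use ij in auto)
    also have "\<dots> = (\<Sum>k\<le>n. A i k * B k j)"
      using ij by (intro sum.cong refl) auto
    finally show "[(?A * ?B) $$ (i, j) = 1\<^sub>m (Suc n) $$ (i, j)] (mod p)"
      using assms(2) ij by (simp add: inverse_matrices_mod_def)
  qed auto
  then have "[det ?A * det ?B = 1] (mod p)"
    by (simp add: det_mult[of _ "Suc n"])
  moreover assume "p dvd det ?B"
  ultimately have "p dvd 1"
    by (metis cong_dvd_iff dvd_mult)
  with assms(1) show False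
    by (simp add: not_prime_unit)
qed

lemma pdiff_dependent_mod_if_order_mod_le:
  assumes "prime p" "vars F \<subseteq> {..n}" "order_mod p n F \<le> n"
  obtains a l where "l \<le> n" "\<not> p dvd a l" "mpoly_cong p (\<Sum>l\<le>n. Const (a l) * pdiff l F) 0"
proof -
  obtain A B k where AB: "inverse_matrices_mod p n A B" and k: "k \<le> n" "k \<notin> vars (reduce p (lin_subst n A F))"
    using assms(3) order_mod_le_iff[OF assms(2)] by blast
  let ?B = "mat (Suc n) (Suc n) (\<lambda>(i, j). B i j)"
  define a where "a l = adj_mat ?B $$ (l, k)" for l
  have Ba: "(\<Sum>l\<le>n. B i l * a l) = (if i = k then det ?B else 0)" if "i \<le> n" for i
  proof -
    have "(?B * adj_mat ?B) $$ (i, k) = (\<Sum>l\<le>n. ?B $$ (i, l) * adj_mat ?B $$ (l, k))"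
      using that k(1) by (intro index_mult_mat_atMost adj_mat(1)) auto
    then have "(\<Sum>l\<le>n. B i l * a l) = (?B * adj_mat ?B) $$ (i, k)"
      unfolding a_def using that by simp
    also have "\<dots> = (if i = k then det ?B else 0)"
      using that k(1) by (simp add: adj_mat(2)[OF mat_carrier])
    finally show ?thesis .
  qed
  have "\<not> p dvd (\<Sum>l\<le>n. B k l * a l)"
    using Ba[OF k(1)] not_dvd_det_if_inverse_mod[OF assms(1) AB] by simp
  then obtain l where "l \<le> n" "\<not> p dvd a l"
    using dvd_sum[of "{..n}" p "\<lambda>l. B k l * a l"] by (auto intro: dvd_mult)
  moreover have "mpoly_cong p (\<Sum>l\<le>n. Const (a l) * pdiff l F) 0"
    using assms(2) AB k Ba by (rule pdiff_combination_cong_0)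
  ultimately show ?thesis
    using that by blast
qed

section \<open>Dependence of the partial derivatives\<close>

lemma inverse_matrices_with_column:
  fixes v :: "nat \<Rightarrow> 'a::field"
  assumes "j \<le> n" "v j \<noteq> 0"
  obtains A B where "inverse_matrices n A B" "\<And>i. A i j = v i"
proof -
  define A where "A i k = (if k = j then v i else if i = k then 1 else 0)" for i k
  define B where "B k l = (if l = j then (if k = j then 1 / v j else - v k / v j)
                           else if k = l then 1 else 0)" for k l
  have "(\<Sum>k\<le>n. A i k * B k l) = (if i = l then 1 else 0)" if "i \<le> n" "l \<le> n" for i l
  proof (cases "l = j")
    case False
    then have "(\<Sum>k\<le>n. A i k * B k l) = (\<Sum>k\<le>n. if k = l then A i k else 0)"
      by (intro sum.cong refl) (simp add: B_def)
    with False that(2) show ?thesis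
      by (simp add: A_def)
  next
    case True
    have "(\<Sum>k\<le>n. A i k * B k l) = A i j * B j j + (\<Sum>k\<in>{..n} - {j}. A i k * B k j)"
      using True assms(1) by (simp add: sum.remove)
    also have "(\<Sum>k\<in>{..n} - {j}. A i k * B k j) = (\<Sum>k\<in>{..n} - {j}. if k = i then - v i / v j else 0)"
      by (intro sum.cong refl) (auto simp: A_def B_def)
    also have "\<dots> = (if i = j then 0 else - v i / v j)"
      using that(1) by simp
    finally show ?thesis
      using True assms(2) by (simp add: A_def B_def)
  qed
  then have "inverse_matrices n A B"
    by (simp add: inverse_matrices_def)
  moreover have "A i j = v i" for i
    by (simp add: A_def)
  ultimately show ?thesis
    using that by blast
qed

lemma order_field_le_if_pdiff_dependent:
  fixes P :: "'a::field_char_0 mpoly"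
  assumes "vars P \<subseteq> {..n}" "j \<le> n" "v j \<noteq> 0" "(\<Sum>i\<le>n. Const (v i) * pdiff i P) = 0"
  shows "order_field n P \<le> n"
proof -
  obtain A B where AB: "inverse_matrices n A B" and Aj: "\<And>i. A i j = v i"
    using inverse_matrices_with_column[where v = v, OF assms(2,3)] by blast
  have "pdiff j (lin_subst n A P) = (\<Sum>i\<le>n. lin_subst n A (pdiff i P) * Const (v i))"
    by (simp add: pdiff_lin_subst[OF assms(1,2)] Aj)
  also have "\<dots> = lin_subst n A (\<Sum>i\<le>n. Const (v i) * pdiff i P)"
    by (simp add: lin_subst_eq_subst subst_sum subst_mult mult.commute)
  also have "\<dots> = 0"
    by (simp add: assms(4) lin_subst_eq_subst)
  finally have "j \<notin> vars (lin_subst n A P)"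
    by (rule notin_vars_if_pdiff_eq_0)
  then show ?thesis
    using order_field_le_iff[OF assms(1)] AB assms(2) by blast
qed

definition pdiff_support :: "nat \<Rightarrow> 'a::comm_semiring_1 mpoly \<Rightarrow> (nat \<Rightarrow>\<^sub>0 nat) set" where
  "pdiff_support n F = (\<Union>l\<le>n. keys (pdiff l F))"

definition gram_pdiff :: "nat \<Rightarrow> 'a::comm_ring_1 mpoly \<Rightarrow> 'a mat" where
  "gram_pdiff n F = mat (Suc n) (Suc n)
     (\<lambda>(i, j). \<Sum>mo\<in>pdiff_support n F. lookup (pdiff i F) mo * lookup (pdiff j F) mo)"

lemma gram_pdiff_carrier: "gram_pdiff n F \<in> carrier_mat (Suc n) (Suc n)"
  by (simp add: gram_pdiff_def)

lemma gram_pdiff_mult: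
  assumes "i \<le> n"
  shows "(\<Sum>j\<le>n. gram_pdiff n F $$ (i, j) * w j)
       = (\<Sum>mo\<in>pdiff_support n F. lookup (pdiff i F) mo * lookup (\<Sum>j\<le>n. Const (w j) * pdiff j F) mo)"
proof -
  have "(\<Sum>j\<le>n. gram_pdiff n F $$ (i, j) * w j)
      = (\<Sum>j\<le>n. \<Sum>mo\<in>pdiff_support n F. lookup (pdiff i F) mo * (w j * lookup (pdiff j F) mo))"
    using assms by (intro sum.cong refl) (simp add: gram_pdiff_def sum_distrib_left sum_distrib_right mult_ac)
  then show ?thesis
    by (subst (asm) sum.swap) (simp add: lookup_sum lookup_Const_mult sum_distrib_left)
qed

lemma lookup_pdiff_combination_notin_support:
  "mo \<notin> pdiff_support n F \<Longrightarrow> lookup (\<Sum>j\<le>n. Const (w j) * pdiff j F) mo = 0"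
  by (simp add: pdiff_support_def lookup_sum lookup_Const_mult in_keys_iff)

lemma gram_pdiff_quadratic_form:
  "(\<Sum>i\<le>n. w i * (\<Sum>j\<le>n. gram_pdiff n F $$ (i, j) * w j))
     = (\<Sum>mo\<in>pdiff_support n F. lookup (\<Sum>j\<le>n. Const (w j) * pdiff j F) mo ^ 2)"
proof -
  let ?S = "pdiff_support n F"
  define c where "c mo = lookup (\<Sum>j\<le>n. Const (w j) * pdiff j F) mo" for mo
  have c_eq: "c mo = (\<Sum>i\<le>n. w i * lookup (pdiff i F) mo)" for mo
    by (simp add: c_def lookup_sum lookup_Const_mult)
  have "(\<Sum>i\<le>n. w i * (\<Sum>j\<le>n. gram_pdiff n F $$ (i, j) * w j))
      = (\<Sum>i\<le>n. \<Sum>mo\<in>?S. w i * lookup (pdiff i F) mo * c mo)"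
    by (intro sum.cong refl) (simp add: gram_pdiff_mult c_def sum_distrib_left mult.assoc)
  also have "\<dots> = (\<Sum>mo\<in>?S. c mo * c mo)"
    by (subst sum.swap) (simp add: c_eq sum_distrib_right)
  finally show ?thesis
    by (simp add: c_def power2_eq_square)
qed

lemma pdiff_dependent_if_det_gram_eq_0:
  fixes F :: "'a::linordered_idom mpoly"
  assumes "det (gram_pdiff n F) = 0"
  obtains w j where "j \<le> n" "w j \<noteq> 0" "(\<Sum>i\<le>n. Const (w i) * pdiff i F) = 0"
proof -
  obtain v where v: "v \<in> carrier_vec (Suc n)" "v \<noteq> 0\<^sub>v (Suc n)" "gram_pdiff n F *\<^sub>v v = 0\<^sub>v (Suc n)"
    using assms det_0_iff_vec_prod_zero[OF gram_pdiff_carrier] by blast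
  define w where "w i = v $ i" for i
  have "(\<Sum>j\<le>n. gram_pdiff n F $$ (i, j) * w j) = 0" if "i \<le> n" for i
  proof -
    have "(gram_pdiff n F *\<^sub>v v) $ i = 0"
      using v(3) that by simp
    then show ?thesis
      using that v(1) gram_pdiff_carrier[of n F]
      by (simp add: scalar_prod_def atLeast0LessThan lessThan_Suc_atMost w_def)
  qed
  then have "(\<Sum>mo\<in>pdiff_support n F. lookup (\<Sum>j\<le>n. Const (w j) * pdiff j F) mo ^ 2) = 0"
    by (simp flip: gram_pdiff_quadratic_form)
  then have "lookup (\<Sum>j\<le>n. Const (w j) * pdiff j F) mo = 0" for mo
    using lookup_pdiff_combination_notin_support[of mo n F w]
    by (cases "mo \<in> pdiff_support n F") (auto simp: sum_nonneg_eq_0_iff pdiff_support_def)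
  then have "(\<Sum>i\<le>n. Const (w i) * pdiff i F) = 0"
    by (intro poly_mapping_eqI) simp
  moreover obtain j where "j < Suc n" "v $ j \<noteq> 0"
    using v(1,2) by (metis carrier_vecD eq_vecI index_zero_vec)
  ultimately show ?thesis
    using that less_Suc_eq_le unfolding w_def by blast
qed

lemma dvd_if_pdiff_combination_cong_0:
  fixes F :: "int mpoly"
  assumes "prime p" "\<not> p dvd det (gram_pdiff n F)"
    and "mpoly_cong p (\<Sum>l\<le>n. Const (a l) * pdiff l F) 0" "l \<le> n"
  shows "p dvd a l"
proof -
  let ?Q = "gram_pdiff n F" and ?J = "adj_mat (gram_pdiff n F)"
  have row: "p dvd (\<Sum>j\<le>n. ?Q $$ (i, j) * a j)" if "i \<le> n" for i
    using assms(3) unfolding gram_pdiff_mult[OF that] mpoly_cong_iff_dvd by (simp add: dvd_sum)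
  have JQ: "(\<Sum>i\<le>n. ?J $$ (l, i) * ?Q $$ (i, j)) = (if l = j then det ?Q else 0)" if "j \<le> n" for j
  proof -
    have "(?J * ?Q) $$ (l, j) = (\<Sum>i\<le>n. ?J $$ (l, i) * ?Q $$ (i, j))"
      using that assms(4) by (intro index_mult_mat_atMost adj_mat(1) gram_pdiff_carrier)
    moreover have "(?J * ?Q) $$ (l, j) = (if l = j then det ?Q else 0)"
      using that assms(4) by (simp add: adj_mat(3)[OF gram_pdiff_carrier])
    ultimately show ?thesis
      by simp
  qed
  have "det ?Q * a l = (\<Sum>j\<le>n. (if l = j then det ?Q else 0) * a j)"
    using assms(4) by (simp add: if_distrib[of "\<lambda>x. x * _"] cong: if_cong)
  also have "\<dots> = (\<Sum>j\<le>n. \<Sum>i\<le>n. ?J $$ (l, i) * (?Q $$ (i, j) * a j))"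
    by (intro sum.cong refl) (simp add: JQ[symmetric] sum_distrib_right mult.assoc)
  also have "\<dots> = (\<Sum>i\<le>n. ?J $$ (l, i) * (\<Sum>j\<le>n. ?Q $$ (i, j) * a j))"
    by (subst sum.swap) (simp add: sum_distrib_left)
  also have "p dvd \<dots>"
    by (rule dvd_sum, rule dvd_mult, rule row) simp
  finally have "p dvd det ?Q * a l" .
  with assms(1,2) show ?thesis
    by (simp add: prime_dvd_mult_iff)
qed

section \<open>Good reduction\<close>

lemma det_gram_pdiff_neq_0:
  fixes F :: "int mpoly"
  assumes "vars F \<subseteq> {..n}" "order_field n (of_int_mpoly F :: rat mpoly) = Suc n"
  shows "det (gram_pdiff n F) \<noteq> 0"
proof
  assume "det (gram_pdiff n F) = 0"
  then obtain w j where "j \<le> n" "w j \<noteq> 0" and dep: "(\<Sum>i\<le>n. Const (w i) * pdiff i F) = 0"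
    by (rule pdiff_dependent_if_det_gram_eq_0)
  moreover have "(\<Sum>i\<le>n. Const (of_int (w i)) * pdiff i (of_int_mpoly F :: rat mpoly)) = 0"
    using arg_cong[OF dep, of of_int_mpoly]
    by (simp add: of_int_mpoly_sum of_int_mpoly_mult of_int_mpoly_Const pdiff_of_int_mpoly)
  ultimately have "order_field n (of_int_mpoly F :: rat mpoly) \<le> n"
    using assms(1) by (intro order_field_le_if_pdiff_dependent) (auto simp: vars_of_int_mpoly)
  with assms(2) show False
    by simp
qed

lemma finite_primes_order_mod_le:
  fixes F :: "int mpoly"
  assumes "vars F \<subseteq> {..n}" "order_field n (of_int_mpoly F :: rat mpoly) = Suc n"
  shows "finite {p. prime p \<and> order_mod p n F \<le> n}"
proof -
  have "{p. prime p \<and> order_mod p n F \<le> n} \<subseteq> {d. d dvd det (gram_pdiff n F)}"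
  proof safe
    fix p :: int assume p: "prime p" "order_mod p n F \<le> n"
    obtain a l where "l \<le> n" "\<not> p dvd a l" "mpoly_cong p (\<Sum>l\<le>n. Const (a l) * pdiff l F) 0"
      using pdiff_dependent_mod_if_order_mod_le[OF p(1) assms(1) p(2)] by blast
    with \<open>prime p\<close> show "p dvd det (gram_pdiff n F)"
      using dvd_if_pdiff_combination_cong_0 by blast
  qed
  then show ?thesis
    using finite_divisors_int[OF det_gram_pdiff_neq_0[OF assms]] finite_subset by blast
qed

lemma common_denominator: "finite S \<Longrightarrow> \<exists>d::int. d > 0 \<and> (\<forall>x\<in>S. of_int d * x \<in> (\<int> :: rat set))"
proof (induct S rule: finite_induct)
  case (insert x S)
  then obtain d where d: "d > 0" "\<forall>y\<in>S. of_int d * y \<in> (\<int> :: rat set)"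
    by blast
  obtain a b where "quotient_of x = (a, b)"
    by (cases "quotient_of x")
  then have b: "b > 0" and x: "x = of_int a / of_int b"
    using quotient_of_denom_pos quotient_of_div by blast+
  have "of_int (d * b) * y \<in> (\<int> :: rat set)" if "y \<in> insert x S" for y
  proof (cases "y = x")
    case True
    then show ?thesis
      using b x by simp
  next
    case False
    then have "of_int b * (of_int d * y) \<in> (\<int> :: rat set)"
      using that d(2) by simp
    then show ?thesis
      by (simp add: mult_ac)
  qed
  with d(1) b show ?case
    by (metis mult_pos_pos)
qed (rule exI[of _ 1], simp)

lemma vars_lin_subst_scaled:
  assumes "\<And>i j. i \<le> n \<Longrightarrow> j \<le> n \<Longrightarrow> A' i j = c * A i j"
  shows "vars (lin_subst n A' P) \<subseteq> vars (lin_subst n A P)"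
proof -
  let ?D = "\<lambda>i j. if i = j then c else 0"
  have "(\<Sum>j\<le>n. A i j * ?D j m) = A' i m" if "i \<le> n" "m \<le> n" for i m
  proof -
    have "(\<Sum>j\<le>n. A i j * ?D j m) = (\<Sum>j\<le>n. if j = m then A i j * c else 0)"
      by (rule sum.cong) auto
    with that assms show ?thesis
      by (simp add: mult.commute)
  qed
  then have "lin_subst n A' P = lin_subst n (\<lambda>i m. \<Sum>j\<le>n. A i j * ?D j m) P"
    by (intro lin_subst_cong) simp
  also have "\<dots> = subst (lin_subst_var n ?D) (lin_subst n A P)"
    unfolding lin_subst_lin_subst[symmetric] by (rule lin_subst_eq_subst)
  finally have eq: "lin_subst n A' P = subst (lin_subst_var n ?D) (lin_subst n A P)" .
  have "vars (lin_subst_var n ?D i) \<subseteq> {i}" for i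
  proof (cases "i \<le> n")
    case True
    have "(\<Sum>j\<le>n. Const (?D i j) * Var j) = (\<Sum>j\<le>n. if j = i then Const c * Var j else 0)"
      by (rule sum.cong) auto
    with True have "lin_subst_var n ?D i = Const c * Var i"
      by (simp add: lin_subst_var_def)
    then show ?thesis
      by (simp only:) (rule order_trans[OF vars_Const_mult vars_Var])
  qed (simp add: lin_subst_var_def vars_Var)
  then show ?thesis
    unfolding eq using vars_subst[of "lin_subst_var n ?D" "lin_subst n A P"] by blast
qed

lemma inverse_matrices_mod_if_scaled:
  assumes "\<And>i j. i \<le> n \<Longrightarrow> j \<le> n \<Longrightarrow> (\<Sum>k\<le>n. A i k * B k j) = c * (if i = j then 1 else 0)"
    and "[u * c = 1] (mod p)"
  shows "inverse_matrices_mod p n A (\<lambda>i j. u * B i j)"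
  unfolding inverse_matrices_mod_def
proof (intro allI impI)
  fix i j assume "i \<le> n" "j \<le> n"
  have "(\<Sum>k\<le>n. A i k * (u * B k j)) = u * (\<Sum>k\<le>n. A i k * B k j)"
    by (simp add: sum_distrib_left mult_ac)
  also have "\<dots> = (u * c) * (if i = j then 1 else 0)"
    using assms(1) \<open>i \<le> n\<close> \<open>j \<le> n\<close> by simp
  finally have "(\<Sum>k\<le>n. A i k * (u * B k j)) = (u * c) * (if i = j then 1 else 0)" .
  then show "[(\<Sum>k\<le>n. A i k * (u * B k j)) = (if i = j then 1 else 0)] (mod p)"
    using cong_scalar_right[OF assms(2)] by simp
qed

lemma inverse_matrices_clear_denominators:
  fixes A B :: "nat \<Rightarrow> nat \<Rightarrow> rat"
  assumes "inverse_matrices n A B"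
  obtains d :: int and A' B' where "d > 0"
    and "\<And>i j. i \<le> n \<Longrightarrow> j \<le> n \<Longrightarrow> of_int (A' i j) = of_int d * A i j"
    and "\<And>i j. i \<le> n \<Longrightarrow> j \<le> n \<Longrightarrow> (\<Sum>k\<le>n. A' i k * B' k j) = d\<^sup>2 * (if i = j then 1 else 0)"
proof -
  let ?S = "(\<lambda>(i, j). A i j) ` ({..n} \<times> {..n}) \<union> (\<lambda>(i, j). B i j) ` ({..n} \<times> {..n})"
  have "finite ?S"
    by simp
  then obtain d :: int where d: "d > 0" "\<forall>x\<in>?S. of_int d * x \<in> \<int>"
    using common_denominator by blast
  define A' where "A' i j = \<lfloor>of_int d * A i j\<rfloor>" for i j
  define B' where "B' i j = \<lfloor>of_int d * B i j\<rfloor>" for i j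
  have A': "of_int (A' i j) = of_int d * A i j" and B': "of_int (B' i j) = of_int d * B i j"
    if "i \<le> n" "j \<le> n" for i j
  proof -
    have "A i j \<in> ?S" "B i j \<in> ?S"
      using that by force+
    then have "of_int d * A i j \<in> \<int>" "of_int d * B i j \<in> \<int>"
      using d(2) by blast+
    then show "of_int (A' i j) = of_int d * A i j" "of_int (B' i j) = of_int d * B i j"
      unfolding A'_def B'_def by (simp_all only: of_int_floor)
  qed
  have "(\<Sum>k\<le>n. A' i k * B' k j) = d\<^sup>2 * (if i = j then 1 else 0)" if "i \<le> n" "j \<le> n" for i j
  proof -
    have "rat_of_int (\<Sum>k\<le>n. A' i k * B' k j) = of_int d ^ 2 * (\<Sum>k\<le>n. A i k * B k j)"
      using that by (simp add: A' B' sum_distrib_left power2_eq_square mult_ac)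
    also have "\<dots> = rat_of_int (d\<^sup>2 * (if i = j then 1 else 0))"
      using assms that by (simp add: inverse_matrices_def)
    finally show ?thesis
      by (simp only: of_int_eq_iff)
  qed
  with d(1) A' show ?thesis
    using that by blast
qed

lemma order_mod_le_if_order_field_le:
  fixes F :: "int mpoly"
  assumes "vars F \<subseteq> {..n}" "order_field n (of_int_mpoly F :: rat mpoly) \<le> n"
  obtains d :: int where "d \<noteq> 0" "\<And>p. prime p \<Longrightarrow> \<not> p dvd d \<Longrightarrow> order_mod p n F \<le> n"
proof -
  let ?F = "of_int_mpoly F :: rat mpoly"
  obtain A B k where AB: "inverse_matrices n A B" and k: "k \<le> n" "k \<notin> vars (lin_subst n A ?F)"
    using assms order_field_le_iff[of ?F n] by (auto simp: vars_of_int_mpoly)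
  obtain d :: int and A' B' where d: "d > 0"
    and A': "\<And>i j. i \<le> n \<Longrightarrow> j \<le> n \<Longrightarrow> of_int (A' i j) = of_int d * A i j"
    and A'B': "\<And>i j. i \<le> n \<Longrightarrow> j \<le> n \<Longrightarrow> (\<Sum>k\<le>n. A' i k * B' k j) = d\<^sup>2 * (if i = j then 1 else 0)"
    using inverse_matrices_clear_denominators[OF AB] by blast
  have "vars (lin_subst n A' F) = vars (of_int_mpoly (lin_subst n A' F) :: rat mpoly)"
    by (simp only: vars_of_int_mpoly)
  also have "\<dots> = vars (lin_subst n (\<lambda>i j. of_int (A' i j)) ?F)"
    by (simp only: of_int_mpoly_lin_subst)
  also have "\<dots> \<subseteq> vars (lin_subst n A ?F)"
    by (rule vars_lin_subst_scaled[where c = "of_int d"]) (simp add: A')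
  finally have k': "k \<notin> vars (reduce p (lin_subst n A' F))" for p
    using k(2) vars_reduce by blast
  show ?thesis
  proof (rule that)
    show "d \<noteq> 0"
      using d by simp
    fix p :: int assume "prime p" "\<not> p dvd d"
    then have "coprime (d\<^sup>2) p"
      using prime_imp_coprime[of p d] by (simp add: coprime_commute)
    then obtain u where "[d\<^sup>2 * u = 1] (mod p)"
      using cong_solve_coprime_int by blast
    then have "inverse_matrices_mod p n A' (\<lambda>i j. u * B' i j)"
      using A'B' by (intro inverse_matrices_mod_if_scaled) (auto simp: mult.commute)
    then show "order_mod p n F \<le> n"
      using order_mod_le_iff[OF assms(1)] k(1) k' by blast
  qed
qed

lemma infinite_primes_not_dvd: "d \<noteq> 0 \<Longrightarrow> infinite {p :: int. prime p \<and> \<not> p dvd d}"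
proof
  assume "d \<noteq> 0" "finite {p :: int. prime p \<and> \<not> p dvd d}"
  then have "finite ({p :: int. prime p \<and> \<not> p dvd d} \<union> {p. p dvd d})"
    by (simp add: finite_divisors_int)
  moreover have "int ` {p. prime p} \<subseteq> {p :: int. prime p \<and> \<not> p dvd d} \<union> {p. p dvd d}"
    by (auto simp add: image_subset_iff)
  ultimately have "finite (int ` {p. prime p})"
    by (rule finite_subset[rotated])
  then show False
    using primes_infinite by (simp add: finite_image_iff)
qed

theorem theorem3p12:
  fixes n :: nat and F :: "int mpoly"
  assumes "is_form F" and "vars F \<subseteq> {..n}"
  shows "order_field n (Poly_Mapping.map (of_int :: int \<Rightarrow> rat) F) = n + 1 \<longleftrightarrow>
         finite {p :: int. prime p \<and> order_mod p n F \<noteq> n + 1}"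
proof -
  \<comment> \<open>The argument never uses that F is homogeneous.\<close>
  have "order_mod p n F \<noteq> n + 1 \<longleftrightarrow> order_mod p n F \<le> n" for p
    using order_mod_le_Suc[OF assms(2), of p] by linarith
  then have bad: "{p. prime p \<and> order_mod p n F \<noteq> n + 1} = {p. prime p \<and> order_mod p n F \<le> n}"
    by simp
  have "order_field n (of_int_mpoly F :: rat mpoly) \<le> Suc n"
    using assms(2) by (intro order_field_le_Suc) (simp add: vars_of_int_mpoly)
  then consider "order_field n (of_int_mpoly F :: rat mpoly) = n + 1"
    | "order_field n (of_int_mpoly F :: rat mpoly) \<le> n"
    by linarith
  then show ?thesis
  proof cases
    case 1
    then show ?thesis
      unfolding bad using finite_primes_order_mod_le[OF assms(2)] by simp
  next
    case 2
    then obtain d where "d \<noteq> 0" and good: "\<And>p. prime p \<Longrightarrow> \<not> p dvd d \<Longrightarrow> order_mod p n F \<le> n"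
      using assms(2) order_mod_le_if_order_field_le by blast
    have "infinite {p. prime p \<and> order_mod p n F \<le> n}"
      using infinite_primes_not_dvd[OF \<open>d \<noteq> 0\<close>] by (rule infinite_super[rotated]) (auto intro: good)
    with 2 show ?thesis
      unfolding bad by simp
  qed
qed

end
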